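(* Let $\Omega$ be a finite state space with at least three states and $X:\Omega\to\mathbb R$ a non-constant security. Then $X$ is separable under every information structure $\Pi\in\mathcal P$ on $\Omega$ (with any number of traders) if and only if either (a) $X$ is an Arrow–Debreu security: there is a state $\omega$ and values $a\neq b$ with $X(\omega)=a$ and $X(\omega')=b$ for all $\omega'\neq\omega$; or (b) there are values $a<b<d$ and two distinct states $\omega_a,\omega_d$ with $X(\omega_a)=a$, $X(\omega_d)=d$ and $X(\omega)=b$ for all $\omega\neq\omega_a,\omega_d$.
   Context: An information structure $\Pi=(\Pi_1,\dots,\Pi_n)$ assigns to each trader $i\in\{1,\dots,n\}$ a partition $\Pi_i$ of $\Omega$; $\Pi_i(\omega)$ is the cell containing $\omega$. $\mathcal P$ is the collection of information structures on state spaces with at least three states such that $\bigcap_i\Pi_i(\omega)=\{\omega\}$ for all $\omega$. $X$ is non-separable under $\Pi$ if there exist a probability distribution $\mu$ on $\Omega$ and $v\in\mathbb R$ such that (i) $X(\omega)\neq v$ for some $\omega\in\operatorname{Supp}(\mu)$, and (ii) $E_\mu[X\mid\Pi_i(\omega)]=v$ for all $i$ and all $\omega\in\operatorname{Supp}(\mu)$; otherwise $X$ is separable under $\Pi$. *)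

theory Defs
  imports Complex_Main "HOL-Library.Disjoint_Sets"
begin

definition cell :: "'a set set \<Rightarrow> 'a \<Rightarrow> 'a set" where
  "cell P w = (THE B. B \<in> P \<and> w \<in> B)"

definition info_structure :: "nat \<Rightarrow> (nat \<Rightarrow> 'a set set) \<Rightarrow> bool" where
  "info_structure n S \<longleftrightarrow>
     (\<forall>i<n. partition_on (UNIV :: 'a set) (S i)) \<and>
     (\<forall>w. (\<Inter>i\<in>{..<n}. cell (S i) w) = {w})"

definition prob_dist :: "('a::finite \<Rightarrow> real) \<Rightarrow> bool" where
  "prob_dist mu \<longleftrightarrow> (\<forall>w. 0 \<le> mu w) \<and> sum mu UNIV = 1"

definition supp :: "('a \<Rightarrow> real) \<Rightarrow> 'a set" where
  "supp mu = {w. mu w > 0}"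

definition cond_exp :: "('a \<Rightarrow> real) \<Rightarrow> ('a \<Rightarrow> real) \<Rightarrow> 'a set \<Rightarrow> real" where
  "cond_exp mu X B = (\<Sum>w\<in>B. mu w * X w) / (\<Sum>w\<in>B. mu w)"

definition non_separable :: "nat \<Rightarrow> (nat \<Rightarrow> 'a::finite set set) \<Rightarrow> ('a \<Rightarrow> real) \<Rightarrow> bool" where
  "non_separable n S X \<longleftrightarrow>
     (\<exists>mu v. prob_dist mu \<and>
        (\<exists>w\<in>supp mu. X w \<noteq> v) \<and>
        (\<forall>i<n. \<forall>w\<in>supp mu. cond_exp mu X (cell (S i) w) = v))"

definition separable :: "nat \<Rightarrow> (nat \<Rightarrow> 'a::finite set set) \<Rightarrow> ('a \<Rightarrow> real) \<Rightarrow> bool" where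
  "separable n S X \<longleftrightarrow> \<not> non_separable n S X"

end

theory Submission imports Defs begin

(* If some price v has at least two states strictly above it and two strictly below it, pair the
   states crosswise, {p1,p2},{p4,p3} for one trader and {p1,p3},{p4,p2} for another, with p1,p4
   above and p2,p3 below; weighting each of the four states by 1/|X - v| makes every cell average
   exactly v, so X is non-separable. Conversely, if at most one state w0 lies below v, a support
   state w above v would have to share each trader's cell with a support state below v, hence with
   w0; then w0 lies in the intersection of the cells of w, which is {w}. Finally, if no v has two
   states on each side, then any two states other than a minimiser and a maximiser of X carry the
   same value (otherwise their midpoint would be such a v), which leaves exactly the shapes (a)
   and (b). *)

definition two_above_two_below :: "('a \<Rightarrow> real) \<Rightarrow> real \<Rightarrow> bool" where
  "two_above_two_below X v \<longleftrightarrow> 2 \<le> card {w. v < X w} \<and> 2 \<le> card {w. X w < v}"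

lemma two_above_two_belowI:
  fixes X :: "'a::finite \<Rightarrow> real"
  assumes "p \<noteq> q" "v < X p" "v < X q" "r \<noteq> s" "X r < v" "X s < v"
  shows "two_above_two_below X v"
proof -
  have "card {p, q} \<le> card {w. v < X w}" "card {r, s} \<le> card {w. X w < v}"
    by (rule card_mono; use assms in auto)+
  moreover have "card {p, q} = 2" "card {r, s} = 2"
    using assms(1,4) by simp_all
  ultimately show ?thesis
    unfolding two_above_two_below_def by linarith
qed

lemma two_above_two_belowE:
  fixes X :: "'a::finite \<Rightarrow> real"
  assumes "two_above_two_below X v"
  obtains p q r s where "p \<noteq> q" "v < X p" "v < X q" "r \<noteq> s" "X r < v" "X s < v"
proof -
  have "\<not> card {w. v < X w} \<le> Suc 0" "\<not> card {w. X w < v} \<le> Suc 0"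
    using assms unfolding two_above_two_below_def by auto
  then show thesis
    using that unfolding card_le_Suc0_iff_eq[OF finite] by blast
qed

lemma cell_partition_on:
  assumes "partition_on UNIV P"
  shows "cell P w \<in> P" and "w \<in> cell P w"
proof -
  have "\<exists>!B. B \<in> P \<and> w \<in> B"
    using partition_onD1[OF assms] partition_onD2[OF assms] by (auto simp: disjoint_def)
  then have "cell P w \<in> P \<and> w \<in> cell P w"
    unfolding cell_def by (rule theI')
  then show "cell P w \<in> P" and "w \<in> cell P w" by auto
qed

lemma cell_map_partition_on:
  fixes f :: "'a \<Rightarrow> 'a set"
  assumes refl: "\<And>w. w \<in> f w" and same: "\<And>u w. u \<in> f w \<Longrightarrow> f u = f w"
  shows "partition_on UNIV (range f)" and "cell (range f) w = f w"
proof -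
  show part: "partition_on UNIV (range f)"
  proof (rule partition_onI)
    show "\<Union> (range f) = UNIV" and "{} \<notin> range f" using refl by blast+
    show "disjnt p q" if "p \<in> range f" "q \<in> range f" "p \<noteq> q" for p q
      using that same unfolding disjnt_def by (metis disjoint_iff rangeE)
  qed
  show "cell (range f) w = f w"
    using cell_partition_on[OF part, of w] same by auto
qed

lemma info_structure_traders_pos:
  fixes S :: "nat \<Rightarrow> 'a::finite set set"
  assumes "info_structure n S" and "1 < card (UNIV :: 'a set)"
  shows "0 < n"
proof (rule ccontr)
  assume "\<not> 0 < n"
  then have "(UNIV :: 'a set) = {undefined}"
    using assms(1) unfolding info_structure_def by simp
  then have "card (UNIV :: 'a set) = Suc 0"
    unfolding card_1_singleton_iff by blast
  with assms(2) show False by simp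
qed

lemma cond_exp_uminus: "cond_exp mu (\<lambda>w. - X w) B = - cond_exp mu X B"
  unfolding cond_exp_def by (simp add: sum_negf)

lemma cond_exp_eq_iff:
  fixes X mu :: "'a \<Rightarrow> real"
  assumes "0 < (\<Sum>w\<in>B. mu w)"
  shows "cond_exp mu X B = v \<longleftrightarrow> (\<Sum>w\<in>B. mu w * (X w - v)) = 0"
  using assms unfolding cond_exp_def
  by (simp add: field_simps algebra_simps sum_subtractf sum_distrib_left)

lemma cond_exp_eq_imp_below:
  fixes X mu :: "'a \<Rightarrow> real"
  assumes "finite B" "\<forall>w. 0 \<le> mu w" "w \<in> B" "0 < mu w" "cond_exp mu X B = v" "v < X w"
  shows "\<exists>u\<in>B. 0 < mu u \<and> X u < v"
proof (rule ccontr)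
  assume "\<not> ?thesis"
  then have nonneg: "0 \<le> mu u * (X u - v)" if "u \<in> B" for u
    using that assms(2) by (metis diff_ge_0_iff_ge less_eq_real_def not_less zero_le_mult_iff)
  have "0 < (\<Sum>u\<in>B. mu u)"
    using assms(1-4) by (intro sum_pos2[where i=w]) auto
  then have "(\<Sum>u\<in>B. mu u * (X u - v)) = 0"
    using assms(5) cond_exp_eq_iff by blast
  moreover have "0 < (\<Sum>u\<in>B. mu u * (X u - v))"
    using assms nonneg by (intro sum_pos2[where i=w]) auto
  ultimately show False by simp
qed

lemma cond_exp_eq_imp_above:
  fixes X mu :: "'a \<Rightarrow> real"
  assumes "finite B" "\<forall>w. 0 \<le> mu w" "w \<in> B" "0 < mu w" "cond_exp mu X B = v" "X w < v"
  shows "\<exists>u\<in>B. 0 < mu u \<and> v < X u"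
  using cond_exp_eq_imp_below[where X="\<lambda>w. - X w" and v="- v"] assms
  by (simp add: cond_exp_uminus)

lemma at_most_one_below_imp_const_on_supp:
  fixes X mu :: "'a::finite \<Rightarrow> real"
  assumes info: "info_structure n S" and traders: "0 < n" and nonneg: "\<forall>w. 0 \<le> mu w"
    and ce: "\<forall>i<n. \<forall>w\<in>supp mu. cond_exp mu X (cell (S i) w) = v"
    and one_below: "card {w. X w < v} \<le> 1"
    and w: "w \<in> supp mu"
  shows "X w = v"
proof -
  have part: "partition_on UNIV (S i)" if "i < n" for i
    using info that unfolding info_structure_def by blast
  have cell: "w1 \<in> cell (S i) w1" "0 < mu w1" "cond_exp mu X (cell (S i) w1) = v"
    if "i < n" "w1 \<in> supp mu" for i w1
    using cell_partition_on(2)[OF part] ce that unfolding supp_def by auto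
  have below_in_cell: "\<exists>u\<in>cell (S i) w1. X u < v"
    if "i < n" "w1 \<in> supp mu" "v < X w1" for i w1
    using cond_exp_eq_imp_below[OF finite nonneg cell[OF that(1,2)] that(3)] by blast
  have not_above: "\<not> v < X w1" if w1: "w1 \<in> supp mu" for w1
  proof
    assume above: "v < X w1"
    obtain w0 where w0: "w0 \<in> cell (S 0) w1" "X w0 < v"
      using below_in_cell[OF traders w1 above] by blast
    have "w0 \<in> cell (S i) w1" if "i < n" for i
    proof -
      obtain u where "u \<in> cell (S i) w1" "X u < v"
        using below_in_cell[OF \<open>i < n\<close> w1 above] by blast
      moreover have "u = w0"
        using one_below \<open>X u < v\<close> w0(2) by (auto simp: card_le_Suc0_iff_eq)
      ultimately show ?thesis by simp
    qed
    then have "w0 \<in> (\<Inter>i\<in>{..<n}. cell (S i) w1)" by simp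
    moreover have "(\<Inter>i\<in>{..<n}. cell (S i) w1) = {w1}"
      using info unfolding info_structure_def by simp
    ultimately have "w0 = w1" by simp
    with w0(2) above show False by simp
  qed
  show "X w = v"
  proof (rule ccontr)
    assume "X w \<noteq> v"
    with not_above[OF w] have "X w < v" by simp
    then obtain u where "0 < mu u" "v < X u"
      using cond_exp_eq_imp_above[OF finite nonneg cell[OF traders w]] by blast
    with not_above[of u] show False unfolding supp_def by simp
  qed
qed

lemma separable_if_never_two_above_two_below:
  fixes X :: "'a::finite \<Rightarrow> real"
  assumes info: "info_structure n S" and traders: "0 < n"
    and never: "\<forall>v. \<not> two_above_two_below X v"
  shows "separable n S X"
  unfolding separable_def non_separable_def
proof
  assume "\<exists>mu v. prob_dist mu \<and> (\<exists>w\<in>supp mu. X w \<noteq> v) \<and>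
    (\<forall>i<n. \<forall>w\<in>supp mu. cond_exp mu X (cell (S i) w) = v)"
  then obtain mu v w where dist: "prob_dist mu" and w: "w \<in> supp mu" "X w \<noteq> v"
    and ce: "\<forall>i<n. \<forall>w\<in>supp mu. cond_exp mu X (cell (S i) w) = v" by blast
  have nonneg: "\<forall>w. 0 \<le> mu w"
    using dist unfolding prob_dist_def by blast
  have "card {w. X w < v} \<le> 1 \<or> card {w. v < X w} \<le> 1"
    using never[rule_format, of v] unfolding two_above_two_below_def by linarith
  then show False
  proof
    assume "card {w. X w < v} \<le> 1"
    with w(2) show False
      using at_most_one_below_imp_const_on_supp[OF info traders nonneg ce _ w(1)] by blast
  next
    assume "card {w. v < X w} \<le> 1"
    have "\<forall>i<n. \<forall>w\<in>supp mu. cond_exp mu (\<lambda>w. - X w) (cell (S i) w) = - v"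
      using ce by (simp add: cond_exp_uminus)
    moreover have "card {w. - X w < - v} \<le> 1"
      using \<open>card {w. v < X w} \<le> 1\<close> by simp
    ultimately have "- X w = - v"
      by (rule at_most_one_below_imp_const_on_supp[OF info traders nonneg _ _ w(1)])
    with w(2) show False by simp
  qed
qed

definition pair_cell :: "'a \<Rightarrow> 'a \<Rightarrow> 'a \<Rightarrow> 'a \<Rightarrow> 'a \<Rightarrow> 'a set" where
  "pair_cell p q r s w = (if w \<in> {p, q} then {p, q} else if w \<in> {r, s} then {r, s} else {w})"

lemma pair_cell_partition_on:
  assumes "{p, q} \<inter> {r, s} = {}"
  shows "partition_on UNIV (range (pair_cell p q r s))"
    and "cell (range (pair_cell p q r s)) w = pair_cell p q r s w"
proof -
  have refl: "w \<in> pair_cell p q r s w" for w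
    unfolding pair_cell_def by simp
  have same: "pair_cell p q r s u = pair_cell p q r s w" if "u \<in> pair_cell p q r s w" for u w
    using that assms unfolding pair_cell_def by (auto split: if_splits)
  show "partition_on UNIV (range (pair_cell p q r s))"
    and "cell (range (pair_cell p q r s)) w = pair_cell p q r s w"
    using cell_map_partition_on[OF refl same] by blast+
qed

lemma pair_cell_in_pairs:
  assumes "w \<in> {p, q, r, s}"
  shows "pair_cell p q r s w \<in> {{p, q}, {r, s}}"
  using assms unfolding pair_cell_def by auto

definition balancing_dist :: "('a \<Rightarrow> real) \<Rightarrow> real \<Rightarrow> 'a set \<Rightarrow> 'a \<Rightarrow> real" where
  "balancing_dist X v P w =
     (if w \<in> P then inverse \<bar>X w - v\<bar> / (\<Sum>u\<in>P. inverse \<bar>X u - v\<bar>) else 0)"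

lemma balancing_dist_normaliser_pos:
  fixes X :: "'a \<Rightarrow> real"
  assumes "finite P" "p \<in> P" "X p \<noteq> v"
  shows "0 < (\<Sum>u\<in>P. inverse \<bar>X u - v\<bar>)"
  using assms by (intro sum_pos2[where i=p]) auto

lemma prob_dist_balancing_dist:
  fixes X :: "'a::finite \<Rightarrow> real"
  assumes "P \<noteq> {}" "\<forall>w\<in>P. X w \<noteq> v"
  shows "prob_dist (balancing_dist X v P)" and "supp (balancing_dist X v P) = P"
proof -
  obtain p where "p \<in> P" using assms(1) by blast
  then have K: "0 < (\<Sum>u\<in>P. inverse \<bar>X u - v\<bar>)"
    using assms(2) by (intro balancing_dist_normaliser_pos) auto
  have "sum (balancing_dist X v P) UNIV = 1"
    using K unfolding balancing_dist_def by (simp add: sum.If_cases flip: sum_divide_distrib)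
  then show "prob_dist (balancing_dist X v P)"
    using K unfolding prob_dist_def by (simp add: balancing_dist_def)
  show "supp (balancing_dist X v P) = P"
    using K assms(2) unfolding supp_def balancing_dist_def by auto
qed

lemma cond_exp_balancing_dist_pair:
  fixes X :: "'a \<Rightarrow> real"
  assumes "finite P" "p \<in> P" "q \<in> P" "v < X p" "X q < v"
  shows "cond_exp (balancing_dist X v P) X {p, q} = v"
proof -
  let ?K = "\<Sum>u\<in>P. inverse \<bar>X u - v\<bar>"
  have K: "0 < ?K"
    using assms by (intro balancing_dist_normaliser_pos) auto
  have "p \<noteq> q" using assms by auto
  have "balancing_dist X v P p * (X p - v) = 1 / ?K"
    "balancing_dist X v P q * (X q - v) = - 1 / ?K"
    using assms K unfolding balancing_dist_def by (auto simp: field_simps)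
  moreover have "0 < (\<Sum>w\<in>{p, q}. balancing_dist X v P w)"
    using assms K \<open>p \<noteq> q\<close> unfolding balancing_dist_def by (simp add: add_pos_pos)
  ultimately show ?thesis
    using \<open>p \<noteq> q\<close> by (simp add: cond_exp_eq_iff)
qed

lemma non_separable_if_two_above_two_below:
  fixes X :: "'a::finite \<Rightarrow> real"
  assumes "two_above_two_below X v"
  shows "\<exists>S. info_structure 2 S \<and> non_separable 2 S X"
proof -
  obtain p1 p4 p2 p3 where above: "p1 \<noteq> p4" "v < X p1" "v < X p4"
    and below: "p2 \<noteq> p3" "X p2 < v" "X p3 < v"
    using assms by (rule two_above_two_belowE)
  have distinct: "p1 \<noteq> p2" "p1 \<noteq> p3" "p4 \<noteq> p2" "p4 \<noteq> p3"
    using above below by auto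
  have disj: "{p1, p2} \<inter> {p4, p3} = {}" "{p1, p3} \<inter> {p4, p2} = {}"
    using distinct above(1) below(1) by auto
  define f :: "nat \<Rightarrow> 'a \<Rightarrow> 'a set" where
    "f i = (if i = 0 then pair_cell p1 p2 p4 p3 else pair_cell p1 p3 p4 p2)" for i
  define S where "S i = range (f i)" for i
  have part: "partition_on UNIV (S i)" and cell: "cell (S i) w = f i w" for i w
    using pair_cell_partition_on[OF disj(1)] pair_cell_partition_on[OF disj(2)]
    unfolding S_def f_def by simp_all
  have "cell (S 0) w \<inter> cell (S 1) w = {w}" for w
  proof -
    have "cell (S 0) w \<inter> cell (S 1) w = pair_cell p1 p2 p4 p3 w \<inter> pair_cell p1 p3 p4 p2 w"
      by (simp add: cell f_def)
    also have "\<dots> = {w}"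
      using distinct above(1) below(1) unfolding pair_cell_def by auto
    finally show ?thesis .
  qed
  moreover have "{..<2::nat} = {0, 1}" by auto
  ultimately have info: "info_structure 2 S"
    unfolding info_structure_def using part by simp
  define P where "P = {p1, p2, p4, p3}"
  define mu where "mu = balancing_dist X v P"
  have dist: "prob_dist mu" and supp: "supp mu = P"
    unfolding mu_def using prob_dist_balancing_dist[where P=P and X=X and v=v] above below P_def
    by auto
  have balanced: "cond_exp mu X {p, q} = v" if "p \<in> {p1, p4}" "q \<in> {p2, p3}" for p q
    using that above below unfolding mu_def by (intro cond_exp_balancing_dist_pair) (auto simp: P_def)
  have "cond_exp mu X (cell (S i) w) = v" if "w \<in> supp mu" for i w
  proof (cases "i = 0")
    case True
    have "w \<in> {p1, p2, p4, p3}"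
      using that unfolding supp P_def .
    then have "cell (S i) w \<in> {{p1, p2}, {p4, p3}}"
      using pair_cell_in_pairs True by (simp add: cell f_def)
    then show ?thesis using balanced by auto
  next
    case False
    have "w \<in> {p1, p3, p4, p2}"
      using that unfolding supp P_def by blast
    then have "cell (S i) w \<in> {{p1, p3}, {p4, p2}}"
      using pair_cell_in_pairs False by (simp add: cell f_def)
    then show ?thesis using balanced by auto
  qed
  moreover have "p1 \<in> supp mu" "X p1 \<noteq> v"
    using supp above unfolding P_def by auto
  ultimately have "non_separable 2 S X"
    unfolding non_separable_def using dist by blast
  with info show ?thesis by blast
qed

definition arrow_debreu_security :: "('a \<Rightarrow> real) \<Rightarrow> bool" where
  "arrow_debreu_security X \<longleftrightarrow>
     (\<exists>w a b. a \<noteq> b \<and> X w = a \<and> (\<forall>w'. w' \<noteq> w \<longrightarrow> X w' = b))"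

definition two_outlier_security :: "('a \<Rightarrow> real) \<Rightarrow> bool" where
  "two_outlier_security X \<longleftrightarrow>
     (\<exists>a b d wa wd. a < b \<and> b < d \<and> wa \<noteq> wd \<and> X wa = a \<and> X wd = d \<and>
        (\<forall>w. w \<noteq> wa \<and> w \<noteq> wd \<longrightarrow> X w = b))"

lemma not_two_above_two_below_if_level:
  fixes X :: "'a::finite \<Rightarrow> real"
  assumes low: "\<And>w. w \<noteq> w_low \<Longrightarrow> b \<le> X w"
    and high: "\<And>w. w \<noteq> w_high \<Longrightarrow> X w \<le> b"
  shows "\<not> two_above_two_below X v"
proof -
  have "{w. X w < v} \<subseteq> {w_low} \<or> {w. v < X w} \<subseteq> {w_high}"
  proof (cases "v < b")
    case True
    have "w = w_low" if "X w < v" for w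
      using low[of w] that True by (cases "w = w_low") auto
    then show ?thesis by blast
  next
    case False
    have "w = w_high" if "v < X w" for w
      using high[of w] that False by (cases "w = w_high") auto
    then show ?thesis by blast
  qed
  then have "card {w. X w < v} \<le> 1 \<or> card {w. v < X w} \<le> 1"
    using card_mono[of "{w_low}"] card_mono[of "{w_high}"] by auto
  then show ?thesis
    unfolding two_above_two_below_def by linarith
qed

lemma never_two_above_two_below_if_shape:
  fixes X :: "'a::finite \<Rightarrow> real"
  assumes "arrow_debreu_security X \<or> two_outlier_security X"
  shows "\<not> two_above_two_below X v"
  using assms unfolding arrow_debreu_security_def two_outlier_security_def
proof (elim disjE exE conjE)
  fix w a b
  assume "\<forall>w'. w' \<noteq> w \<longrightarrow> X w' = b"
  then show ?thesis
    by (intro not_two_above_two_below_if_level[where w_low=w and w_high=w and b=b]) auto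
next
  fix a b d wa wd
  assume "a < b" "b < d" "X wa = a" "X wd = d" "\<forall>w. w \<noteq> wa \<and> w \<noteq> wd \<longrightarrow> X w = b"
  then show ?thesis
    by (intro not_two_above_two_below_if_level[where w_low=wa and w_high=wd and b=b])
      (metis order.refl less_imp_le)+
qed

lemma shape_if_never_two_above_two_below:
  fixes X :: "'a::finite \<Rightarrow> real"
  assumes card: "3 \<le> card (UNIV :: 'a set)" and nonconst: "\<exists>w w'. X w \<noteq> X w'"
    and never: "\<forall>v. \<not> two_above_two_below X v"
  shows "arrow_debreu_security X \<or> two_outlier_security X"
proof -
  have "Min (range X) \<in> range X" "Max (range X) \<in> range X"
    by (simp_all add: Min_in Max_in)
  then obtain wa wd where wa: "X wa = Min (range X)" and wd: "X wd = Max (range X)"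
    by (metis rangeE)
  have min: "X wa \<le> X w" and max: "X w \<le> X wd" for w
    unfolding wa wd by simp_all
  obtain u u' where "X u \<noteq> X u'"
    using nonconst by blast
  then have extremes: "X wa < X wd"
    using min[of u] min[of u'] max[of u] max[of u'] by linarith
  have "card {wa, wd} < card (UNIV :: 'a set)"
    using card by (cases "wa = wd") auto
  then have "{wa, wd} \<noteq> UNIV" by auto
  then obtain w3 where w3: "w3 \<noteq> wa" "w3 \<noteq> wd" by blast
  have not_less: "\<not> X u < X u'" if "u \<noteq> wa" "u' \<noteq> wd" for u u'
  proof
    assume "X u < X u'"
    then have "two_above_two_below X ((X u + X u') / 2)"
      using that min[of u] max[of u']
      by (intro two_above_two_belowI[where p=u' and q=wd and r=wa and s=u]) auto
    with never show False by blast
  qed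
  define b where "b = X w3"
  have level: "X w = b" if "w \<noteq> wa" "w \<noteq> wd" for w
    using not_less[of w w3] not_less[of w3 w] that w3 unfolding b_def by linarith
  have "X wa \<le> b" "b \<le> X wd"
    using min max unfolding b_def by auto
  then consider "X wa < b" "b < X wd" | "X wa = b" | "b = X wd"
    by linarith
  then show ?thesis
  proof cases
    case 1
    then have "two_outlier_security X"
      unfolding two_outlier_security_def using extremes level
      by (intro exI[of _ "X wa"] exI[of _ b] exI[of _ "X wd"] exI[of _ wa] exI[of _ wd]) auto
    then show ?thesis ..
  next
    case 2
    have "X w = b" if "w \<noteq> wd" for w
      using 2 level that by (cases "w = wa") auto
    then have "arrow_debreu_security X"
      unfolding arrow_debreu_security_def using extremes 2
      by (intro exI[of _ wd] exI[of _ "X wd"] exI[of _ b]) auto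
    then show ?thesis ..
  next
    case 3
    have "X w = b" if "w \<noteq> wa" for w
      using 3 level that by (cases "w = wd") auto
    then have "arrow_debreu_security X"
      unfolding arrow_debreu_security_def using extremes 3
      by (intro exI[of _ wa] exI[of _ "X wa"] exI[of _ b]) auto
    then show ?thesis ..
  qed
qed

theorem proposition3:
  fixes X :: "'a::finite \<Rightarrow> real"
  assumes "card (UNIV :: 'a set) \<ge> 3"
    and "\<exists>w w'. X w \<noteq> X w'"
  shows "(\<forall>n (S :: nat \<Rightarrow> 'a set set). info_structure n S \<longrightarrow> separable n S X)
     \<longleftrightarrow> ((\<exists>w a b. a \<noteq> b \<and> X w = a \<and> (\<forall>w'. w' \<noteq> w \<longrightarrow> X w' = b))
          \<or> (\<exists>a b d wa wd. a < b \<and> b < d \<and> wa \<noteq> wd \<and> X wa = a \<and> X wd = d \<and>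
               (\<forall>w. w \<noteq> wa \<and> w \<noteq> wd \<longrightarrow> X w = b)))"
proof -
  have traders: "0 < n" if "info_structure n S" for n and S :: "nat \<Rightarrow> 'a set set"
    using info_structure_traders_pos[OF that] assms(1) by simp
  have "(\<forall>n (S :: nat \<Rightarrow> 'a set set). info_structure n S \<longrightarrow> separable n S X)
      \<longleftrightarrow> (\<forall>v. \<not> two_above_two_below X v)"
  proof
    assume "\<forall>n (S :: nat \<Rightarrow> 'a set set). info_structure n S \<longrightarrow> separable n S X"
    then show "\<forall>v. \<not> two_above_two_below X v"
      using non_separable_if_two_above_two_below unfolding separable_def by blast
  qed (use separable_if_never_two_above_two_below traders in blast)
  also have "\<dots> \<longleftrightarrow> arrow_debreu_security X \<or> two_outlier_security X"
    using shape_if_never_two_above_two_below[OF assms] never_two_above_two_below_if_shape by blast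
  finally show ?thesis
    unfolding arrow_debreu_security_def two_outlier_security_def .
qed

end
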